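(* Let $C: y^2=a_0x^5+a_1x^4+\cdots+a_5$ be a hyperelliptic curve of genus 2. Let $P_1=(x_1,y_1),P_2=(x_2,y_2),Q_1=(x_3,y_3),Q_2=(x_4,y_4)$ be finite points of $C$ with $x_1,\dots,x_4$ pairwise distinct. Represent $J_1=P_1+P_2-2\infty$ by its Mumford pair $(x^2+\alpha_1x+\beta_1,\ \gamma_1x+\delta_1)$ and $J_2=Q_1+Q_2-2\infty$ by $(x^2+\alpha_2x+\beta_2,\ \gamma_2x+\delta_2)$. Define $N$ and $b_0,b_1,b_2,b_3$ by $N=(\beta_1-\beta_2)^2+(\alpha_1-\alpha_2)(\alpha_1\beta_2-\alpha_2\beta_1)$, $b_0=\tfrac1N((\beta_2-\beta_1)(\gamma_1-\gamma_2)+(\alpha_1-\alpha_2)(\delta_1-\delta_2))$, $b_1=\tfrac1N((\alpha_2\beta_2-\alpha_1\beta_1)(\gamma_1-\gamma_2)+(\alpha_1^2-\alpha_2^2-\beta_1+\beta_2)(\delta_1-\delta_2))$, $b_2=\tfrac1N(\alpha_2^2\beta_1\gamma_1+\alpha_1^2\beta_2\gamma_2-\alpha_1\alpha_2(\beta_1\gamma_1+\beta_2\gamma_2)+(\beta_1-\beta_2)(\beta_1\gamma_2-\beta_2\gamma_1)+(\alpha_1\alpha_2(\alpha_1-\alpha_2)+(\alpha_1\beta_2-\alpha_2\beta_1))(\delta_1-\delta_2))$, $b_3=\tfrac1N((\alpha_2-\alpha_1)\beta_1\beta_2(\gamma_1-\gamma_2)+\alpha_1^2\beta_2\delta_1+\alpha_2^2\beta_1\delta_2-\alpha_1\alpha_2(\beta_2\delta_1+\beta_1\delta_2)+(\beta_1-\beta_2)(\beta_1\delta_2-\beta_2\delta_1))$.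 Assume $N\,b_0\,\beta_1\beta_2\ne0$. Define $$\alpha_3=-\alpha_1-\alpha_2-\frac{a_0-2b_0b_1}{b_0^2},\quad \beta_3=\frac{b_3^2-a_5}{b_0^2\beta_1\beta_2},\quad \gamma_3=-b_2+b_1\alpha_3-b_0\alpha_3^2+b_0\beta_3,\quad \delta_3=-b_0\alpha_3\beta_3+b_1\beta_3-b_3,$$ and let $x_5,x_6$ be the roots (with multiplicity) of $x^2+\alpha_3x+\beta_3$. Then $(x_5,\gamma_3x_5+\delta_3)$ and $(x_6,\gamma_3x_6+\delta_3)$ lie on $C$ and $$J_1+J_2\sim (x_5,\gamma_3x_5+\delta_3)+(x_6,\gamma_3x_6+\delta_3)-2\infty,$$ i.e. the sum $J_1+J_2$ has Mumford pair $(x^2+\alpha_3x+\beta_3,\ \gamma_3x+\delta_3)$.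
   Context: $C=\{(x,y)\in\mathbb{C}^2:y^2=p(x)\}\cup\{\infty\}$ where $p(x)=a_0x^5+\cdots+a_5$, $a_0\ne0$, has no repeated roots; $\infty$ is the single point at infinity. $\sim$ denotes linear equivalence of divisors (equality in $\mathrm{Jac}(C)$). Mumford pair: for finite points $(u_1,v_1),(u_2,v_2)$ of $C$ with $u_1\ne u_2$, the divisor $(u_1,v_1)+(u_2,v_2)-2\infty$ is represented by $(A(x),B(x))$ with $A(x)=(x-u_1)(x-u_2)=x^2+\alpha x+\beta$ and $B(x)=\gamma x+\delta$ the linear polynomial with $B(u_i)=v_i$; for a double point $2(u_1,v_1)-2\infty$ one takes $A=(x-u_1)^2$ and $B(x)=\frac{p'(u_1)}{2v_1}(x-u_1)+v_1$. *)

theory Defs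
  imports "HOL-Complex_Analysis.Complex_Analysis" "HOL-Computational_Algebra.Polynomial"
begin

text \<open>Points of the (smooth projective model of the) genus-2 curve y^2 = p(x), deg p = 5:
  the single point at infinity, or a finite point (x,y).\<close>
datatype cpt = Inf | Fin complex complex

definition on_curve :: "complex poly \<Rightarrow> cpt \<Rightarrow> bool" where
  "on_curve p P = (case P of Inf \<Rightarrow> True | Fin u v \<Rightarrow> v^2 = poly p u)"

text \<open>Elements of the function field C(x)[y]/(y^2 - p): f = r1/r2 + (s1/s2) y,
  represented by four polynomials (r1, r2, s1, s2).\<close>
type_synonym ffun = "complex poly \<times> complex poly \<times> complex poly \<times> complex poly"

definition ff_eval :: "ffun \<Rightarrow> complex \<Rightarrow> complex \<Rightarrow> complex" where
  "ff_eval F x y = (case F of (r1, r2, s1, s2) \<Rightarrow> poly r1 x / poly r2 x + poly s1 x / poly s2 x * y)"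

text \<open>Nonzero element of the function field (1 and y are independent over C(x)).\<close>
definition ff_valid :: "ffun \<Rightarrow> bool" where
  "ff_valid F = (case F of (r1, r2, s1, s2) \<Rightarrow> r2 \<noteq> 0 \<and> s2 \<noteq> 0 \<and> (r1 \<noteq> 0 \<or> s1 \<noteq> 0))"

text \<open>g is the expression of F in a local parameter t at the point P (t = 0 corresponds to P):
  at a non-branch finite point (u,v): x = u + t, y = Y(t) with Y(0) = v;
  at a branch point (u,0): x = u + t^2, y = Y(t);
  at infinity: x = 1/t^2, y = Y(t)/t^5 with Y holomorphic.\<close>
definition local_expr :: "complex poly \<Rightarrow> cpt \<Rightarrow> ffun \<Rightarrow> (complex \<Rightarrow> complex) \<Rightarrow> bool" where
  "local_expr p P F g \<longleftrightarrow> (\<exists>e Y. e > 0 \<and> Y holomorphic_on ball 0 e \<and>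
     (case P of
        Fin u v \<Rightarrow>
          (if v \<noteq> 0 then Y 0 = v \<and> (\<forall>t\<in>ball 0 e. (Y t)^2 = poly p (u + t))
                  \<and> (\<forall>t\<in>ball 0 e - {0}. g t = ff_eval F (u + t) (Y t))
           else (\<forall>t\<in>ball 0 e. (Y t)^2 = poly p (u + t^2))
                  \<and> (\<forall>t\<in>ball 0 e - {0}. g t = ff_eval F (u + t^2) (Y t)))
      | Inf \<Rightarrow> (\<forall>t\<in>ball 0 e - {0}. (Y t)^2 = t^10 * poly p (1 / t^2)
                  \<and> g t = ff_eval F (1 / t^2) (Y t / t^5))))"

definition ff_ord :: "complex poly \<Rightarrow> ffun \<Rightarrow> cpt \<Rightarrow> int" where
  "ff_ord p F P = (SOME n. \<exists>g. local_expr p P F g \<and> zorder g 0 = n)"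

type_synonym cdivisor = "cpt \<Rightarrow> int"

definition ff_div :: "complex poly \<Rightarrow> ffun \<Rightarrow> cdivisor" where
  "ff_div p F = (\<lambda>P. if on_curve p P then ff_ord p F P else 0)"

definition lin_equiv :: "complex poly \<Rightarrow> cdivisor \<Rightarrow> cdivisor \<Rightarrow> bool" where
  "lin_equiv p D1 D2 \<longleftrightarrow> (\<exists>F. ff_valid F \<and> (\<forall>P. D1 P - D2 P = ff_div p F P))"

definition pt_div :: "cpt \<Rightarrow> cdivisor" where
  "pt_div P = (\<lambda>Q. if Q = P then 1 else 0)"

definition two_pt_div :: "cpt \<Rightarrow> cpt \<Rightarrow> cdivisor" where
  "two_pt_div P Q = (\<lambda>R. pt_div P R + pt_div Q R - 2 * pt_div Inf R)"

end

theory Submission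
  imports Defs
begin

text \<open>
  The coefficients b0, ..., b3 are those of the cubic b(x) = b0 x^3 + b1 x^2 + b2 x + b3 through the
  four points P1, P2, Q1, Q2: reducing b modulo x^2 + alpha_i x + beta_i gives gamma_i x + delta_i.
  Hence b^2 - p is a sextic with leading coefficient b0^2 vanishing at x1, ..., x4, and alpha3, beta3
  are chosen to match its x^5 and constant coefficients, so b^2 - p = b0^2 A1 A2 A3 with
  A_i = x^2 + alpha_i x + beta_i. The function f = (y - b(x)) / A3(x) therefore has zeros at P1, P2,
  Q1, Q2, poles at (x5, -b(x5)), (x6, -b(x6)) and a double pole at infinity, that is
  div f = J1 + J2 - ((x5, -b(x5)) + (x6, -b(x6)) - 2 infinity); finally gamma3 x + delta3 is the
  remainder of -b(x) modulo A3. Each order is read off by writing f, in the local parameter t of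
  the point, as t^k times a quotient of functions holomorphic and nonzero at t = 0.
\<close>

lemma zorder_eq_if_quotient:
  fixes g num den :: "complex \<Rightarrow> complex"
  assumes e: "e > 0" and hn: "num holomorphic_on ball 0 e" and hd: "den holomorphic_on ball 0 e"
    and n0: "num 0 \<noteq> 0" and d0: "den 0 \<noteq> 0"
    and eq: "\<And>t. t \<in> ball 0 e \<Longrightarrow> t \<noteq> 0 \<Longrightarrow> den t \<noteq> 0 \<Longrightarrow> g t = num t / den t * t powi n"
  shows "zorder g 0 = n"
proof -
  define S where "S = ball 0 e \<inter> den -` (-{0})"
  have "continuous_on (ball 0 e) den" using hd holomorphic_on_imp_continuous_on by blast
  then have "open (den -` (-{0}) \<inter> ball 0 e)" using continuous_on_open_vimage[of "ball 0 e" den] by auto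
  then have "open S" unfolding S_def by (simp add: Int_commute)
  moreover have "0 \<in> S" using e d0 by (simp add: S_def)
  moreover have "(\<lambda>t. num t / den t) holomorphic_on S"
    by (rule holomorphic_on_divide)
      (auto simp: S_def intro: holomorphic_on_subset[OF hn] holomorphic_on_subset[OF hd])
  ultimately show ?thesis
    by (rule zorder_eqI) (use n0 d0 eq in \<open>auto simp: S_def\<close>)
qed

lemma holomorphic_sqrt_near_0:
  fixes f :: "complex \<Rightarrow> complex"
  assumes hf: "f holomorphic_on UNIV" and c: "c \<noteq> 0" and f0: "f 0 = c^2"
  obtains e Y where "e > 0" "Y holomorphic_on ball 0 e" "Y 0 = c" "\<And>t. t \<in> ball 0 e \<Longrightarrow> (Y t)^2 = f t"
proof -
  have "isCont f 0" using hf holomorphic_on_imp_continuous_on continuous_on_eq_continuous_at by blast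
  moreover have "norm (c^2) > 0" using c by simp
  ultimately obtain e where e: "e > 0" and he: "\<And>t. dist t 0 < e \<Longrightarrow> dist (f t) (f 0) < norm (c^2)"
    unfolding continuous_at_eps_delta by blast
  have nonpos: "f t / c^2 \<notin> \<real>\<^sub>\<le>\<^sub>0" if "t \<in> ball 0 e" for t
  proof -
    have "dist (f t) (c^2) < norm (c^2)" using he[of t] that f0 by (simp add: dist_commute)
    then have "norm (f t / c^2 - 1) < 1" using c
      by (simp add: dist_norm norm_divide divide_simps diff_divide_distrib[symmetric])
    then have "Re (f t / c^2) > 0"
      using complex_Re_le_cmod[of "1 - f t / c^2"] by (simp add: norm_minus_commute)
    then show ?thesis by (simp add: complex_nonpos_Reals_iff)
  qed
  define Y where "Y = (\<lambda>t. c * csqrt (f t / c^2))"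
  have "Y holomorphic_on ball 0 e" unfolding Y_def
    by (intro holomorphic_intros holomorphic_on_csqrt' holomorphic_on_subset[OF hf]) (use nonpos in auto)
  moreover have "Y 0 = c" using f0 c by (simp add: Y_def)
  moreover have "(Y t)^2 = f t" for t using c by (simp add: Y_def power_mult_distrib)
  ultimately show thesis using that e by blast
qed

lemma poly_shift_order:
  fixes A :: "complex poly"
  assumes "A \<noteq> 0"
  obtains R where "poly R u \<noteq> 0" "\<And>t. poly A (u + t) = t ^ order u A * poly R (u + t)"
proof -
  from order_decomp[OF assms, of u] obtain R where R: "A = [:-u,1:] ^ order u A * R" "\<not> [:-u,1:] dvd R"
    by auto
  have "poly A (u + t) = t ^ order u A * poly R (u + t)" for t
    by (subst R(1)) (simp add: poly_power)
  with R(2) show thesis using that by (simp add: poly_eq_0_iff_dvd)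
qed

lemma rsquarefree_root_factor:
  fixes p :: "complex poly"
  assumes "rsquarefree p" "poly p u = 0"
  obtains q where "p = [:-u,1:] * q" "poly q u \<noteq> 0"
proof -
  have "p \<noteq> 0" using assms(1) by (simp add: rsquarefree_def)
  with assms have "order u p = 1" by (rule rsquarefree_root_order)
  with order_decomp[OF \<open>p \<noteq> 0\<close>, of u] obtain q where "p = [:-u,1:] * q" "\<not> [:-u,1:] dvd q" by auto
  then show thesis using that by (simp add: poly_eq_0_iff_dvd)
qed

lemma ff_ord_eqI:
  assumes "\<exists>g. local_expr p P F g" and "\<And>g. local_expr p P F g \<Longrightarrow> zorder g 0 = n"
  shows "ff_ord p F P = n"
  unfolding ff_ord_def by (rule some_equality) (use assms in auto)

lemma local_expr_exists_nonbranch: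
  assumes "v \<noteq> 0" and "v^2 = poly p u"
  shows "\<exists>g. local_expr p (Fin u v) F g"
proof -
  have "(\<lambda>t. poly p (u + t)) holomorphic_on UNIV" by (intro holomorphic_intros)
  from holomorphic_sqrt_near_0[OF this assms(1)] assms(2) obtain e Y where "e > 0"
    "Y holomorphic_on ball 0 e" "Y 0 = v" "\<And>t. t \<in> ball 0 e \<Longrightarrow> (Y t)^2 = poly p (u + t)"
    by auto
  then show ?thesis unfolding local_expr_def using assms(1)
    by (intro exI[of _ "\<lambda>t. ff_eval F (u + t) (Y t)"] exI[of _ e] exI[of _ Y]) auto
qed

lemma local_expr_exists_branch:
  assumes "rsquarefree p" and "poly p u = 0"
  shows "\<exists>g. local_expr p (Fin u 0) F g"
proof -
  obtain q where q: "p = [:-u,1:] * q" "poly q u \<noteq> 0" using rsquarefree_root_factor[OF assms] .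
  have "(\<lambda>t. poly q (u + t^2)) holomorphic_on UNIV" by (intro holomorphic_intros)
  moreover have "csqrt (poly q u) \<noteq> 0" using q(2) by simp
  moreover have "poly q (u + 0^2) = (csqrt (poly q u))^2" by simp
  ultimately obtain e W where "e > 0" "W holomorphic_on ball 0 e"
    "\<And>t. t \<in> ball 0 e \<Longrightarrow> (W t)^2 = poly q (u + t^2)"
    by (rule holomorphic_sqrt_near_0) blast
  moreover have "(\<lambda>t. t * W t) holomorphic_on ball 0 e" by (intro holomorphic_intros) fact
  moreover have "(t * W t)^2 = poly p (u + t^2)" if "t \<in> ball 0 e" for t
    using calculation(3)[OF that] by (simp add: q(1) power_mult_distrib algebra_simps)
  ultimately show ?thesis unfolding local_expr_def
    by (intro exI[of _ "\<lambda>t. ff_eval F (u + t^2) (t * W t)"] exI[of _ e] exI[of _ "\<lambda>t. t * W t"]) auto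
qed

lemma local_expr_exists_Inf:
  assumes "p = [:a5, a4, a3, a2, a1, a0:]" and "a0 \<noteq> 0"
  shows "\<exists>g. local_expr p Inf F g"
proof -
  define f where "f = (\<lambda>t::complex. a0 + a1 * t^2 + a2 * t^4 + a3 * t^6 + a4 * t^8 + a5 * t^10)"
  have "f holomorphic_on UNIV" unfolding f_def by (intro holomorphic_intros)
  moreover have "csqrt a0 \<noteq> 0" "f 0 = (csqrt a0)^2" using assms(2) by (simp_all add: f_def)
  ultimately obtain e Y where "e > 0" "Y holomorphic_on ball 0 e" "\<And>t. t \<in> ball 0 e \<Longrightarrow> (Y t)^2 = f t"
    by (rule holomorphic_sqrt_near_0) blast
  moreover have "f t = t^10 * poly p (1 / t^2)" if "t \<noteq> 0" for t
    using that by (simp add: f_def assms(1) field_simps)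
  ultimately show ?thesis unfolding local_expr_def
    by (intro exI[of _ "\<lambda>t. ff_eval F (1 / t^2) (Y t / t^5)"] exI[of _ e] exI[of _ Y]) auto
qed

definition cantor_fun :: "complex poly \<Rightarrow> complex poly \<Rightarrow> ffun" where
  "cantor_fun b A = (-b, A, 1, A)"

lemma ff_eval_cantor_fun: "ff_eval (cantor_fun b A) x y = (y - poly b x) / poly A x"
  by (simp add: cantor_fun_def ff_eval_def diff_divide_distrib)

lemma ff_valid_cantor_fun: "A \<noteq> 0 \<Longrightarrow> ff_valid (cantor_fun b A)"
  by (simp add: cantor_fun_def ff_valid_def)

lemma ff_ord_cantor_fun_Inf:
  assumes p: "p = [:a5, a4, a3, a2, a1, a0:]" "a0 \<noteq> 0"
    and b: "b = [:b3, b2, b1, b0:]" "b0 \<noteq> 0" and A: "A = [:\<beta>, \<alpha>, 1:]"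
  shows "ff_ord p (cantor_fun b A) Inf = -2"
proof (rule ff_ord_eqI)
  show "\<exists>g. local_expr p Inf (cantor_fun b A) g" by (rule local_expr_exists_Inf[OF p])
next
  fix g assume "local_expr p Inf (cantor_fun b A) g"
  then obtain e Y where e: "e > 0" and hY: "Y holomorphic_on ball 0 e"
    and gY: "\<And>t. t \<in> ball 0 e - {0} \<Longrightarrow> g t = (Y t / t^5 - poly b (1 / t^2)) / poly A (1 / t^2)"
    unfolding local_expr_def by (auto simp: ff_eval_cantor_fun)
  define num where "num = (\<lambda>t. t * Y t - (b0 + b1 * t^2 + b2 * t^4 + b3 * t^6))"
  define den where "den = (\<lambda>t::complex. 1 + \<alpha> * t^2 + \<beta> * t^4)"
  show "zorder g 0 = -2"
  proof (rule zorder_eq_if_quotient[OF e, of num den])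
    show "num holomorphic_on ball 0 e" unfolding num_def by (intro holomorphic_intros hY)
    show "den holomorphic_on ball 0 e" unfolding den_def by (intro holomorphic_intros)
    show "num 0 \<noteq> 0" using b(2) by (simp add: num_def)
    show "den 0 \<noteq> 0" by (simp add: den_def)
  next
    fix t :: complex assume t: "t \<in> ball 0 e" "t \<noteq> 0" "den t \<noteq> 0"
    have A_at: "poly A (1 / t^2) = den t / t^4" using t(2) by (simp add: A den_def field_simps)
    have b_at: "poly b (1 / t^2) = (b0 + b1 * t^2 + b2 * t^4 + b3 * t^6) / t^6"
      using t(2) by (simp add: b(1) field_simps)
    have "g t = (Y t / t^5 - poly b (1 / t^2)) / poly A (1 / t^2)" using gY t by simp
    also have "\<dots> = num t / den t * t powi (-2)"
      unfolding A_at b_at num_def using t(2,3)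
      by (simp add: power_int_minus field_simps) (simp add: eval_nat_numeral)
    finally show "g t = num t / den t * t powi (-2)" .
  qed
qed

lemma ff_ord_cantor_fun_nonbranch_pole:
  fixes p b A :: "complex poly"
  assumes v: "v \<noteq> 0" "v^2 = poly p u" and vb: "v \<noteq> poly b u" and A: "A \<noteq> 0"
  shows "ff_ord p (cantor_fun b A) (Fin u v) = - int (order u A)"
proof (rule ff_ord_eqI)
  show "\<exists>g. local_expr p (Fin u v) (cantor_fun b A) g" by (rule local_expr_exists_nonbranch[OF v])
next
  fix g assume "local_expr p (Fin u v) (cantor_fun b A) g"
  then obtain e Y where e: "e > 0" and hY: "Y holomorphic_on ball 0 e" and Y0: "Y 0 = v"
    and gY: "\<And>t. t \<in> ball 0 e - {0} \<Longrightarrow> g t = (Y t - poly b (u + t)) / poly A (u + t)"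
    unfolding local_expr_def using v(1) by (auto simp: ff_eval_cantor_fun)
  obtain R where R: "poly R u \<noteq> 0" "\<And>t. poly A (u + t) = t ^ order u A * poly R (u + t)"
    using poly_shift_order[OF A] by blast
  show "zorder g 0 = - int (order u A)"
  proof (rule zorder_eq_if_quotient[OF e, of "\<lambda>t. Y t - poly b (u + t)" "\<lambda>t. poly R (u + t)"])
    show "(\<lambda>t. Y t - poly b (u + t)) holomorphic_on ball 0 e" by (intro holomorphic_intros hY)
    show "(\<lambda>t. poly R (u + t)) holomorphic_on ball 0 e" by (intro holomorphic_intros)
  next
    fix t :: complex assume "t \<in> ball 0 e" "t \<noteq> 0"
    then show "g t = (Y t - poly b (u + t)) / poly R (u + t) * t powi (- int (order u A))"
      using gY R(2) by (simp add: power_int_minus field_simps)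
  qed (use vb Y0 R(1) in auto)
qed

lemma ff_ord_cantor_fun_nonbranch_zero:
  fixes p b A E :: "complex poly"
  assumes v: "v \<noteq> 0" "v^2 = poly p u" and vb: "v = poly b u" and A: "A \<noteq> 0"
    and E: "E \<noteq> 0" "c \<noteq> 0" "b^2 - p = smult c E"
  shows "ff_ord p (cantor_fun b A) (Fin u v) = int (order u E) - int (order u A)"
proof (rule ff_ord_eqI)
  show "\<exists>g. local_expr p (Fin u v) (cantor_fun b A) g" by (rule local_expr_exists_nonbranch[OF v])
next
  fix g assume "local_expr p (Fin u v) (cantor_fun b A) g"
  then obtain e Y where e: "e > 0" and hY: "Y holomorphic_on ball 0 e" and Y0: "Y 0 = v"
    and Ysq: "\<And>t. t \<in> ball 0 e \<Longrightarrow> (Y t)^2 = poly p (u + t)"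
    and gY: "\<And>t. t \<in> ball 0 e - {0} \<Longrightarrow> g t = (Y t - poly b (u + t)) / poly A (u + t)"
    unfolding local_expr_def using v(1) by (auto simp: ff_eval_cantor_fun)
  obtain R where R: "poly R u \<noteq> 0" "\<And>t. poly A (u + t) = t ^ order u A * poly R (u + t)"
    using poly_shift_order[OF A] by blast
  obtain Q where Q: "poly Q u \<noteq> 0" "\<And>t. poly E (u + t) = t ^ order u E * poly Q (u + t)"
    using poly_shift_order[OF E(1)] by blast
  \<comment> \<open>y - b = (y^2 - b^2) / (y + b) = - c E(x) / (y + b), and y + b = 2 v \<noteq> 0 at the point\<close>
  define num where "num = (\<lambda>t. - c * poly Q (u + t))"
  define den where "den = (\<lambda>t. (Y t + poly b (u + t)) * poly R (u + t))"
  show "zorder g 0 = int (order u E) - int (order u A)"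
  proof (rule zorder_eq_if_quotient[OF e, of num den])
    show "num holomorphic_on ball 0 e" unfolding num_def by (intro holomorphic_intros)
    show "den holomorphic_on ball 0 e" unfolding den_def by (intro holomorphic_intros hY)
    show "num 0 \<noteq> 0" using E(2) Q(1) by (simp add: num_def)
    show "den 0 \<noteq> 0" using v(1) vb Y0 R(1) by (simp add: den_def)
  next
    fix t :: complex assume t: "t \<in> ball 0 e" "t \<noteq> 0" "den t \<noteq> 0"
    have "poly (b^2 - p) (u + t) = poly (smult c E) (u + t)" using E(3) by simp
    then have "(Y t - poly b (u + t)) * (Y t + poly b (u + t)) = - c * t ^ order u E * poly Q (u + t)"
      using Ysq[OF t(1)] Q(2)[of t] by (simp add: power2_eq_square algebra_simps)
    moreover have "Y t + poly b (u + t) \<noteq> 0" using t(3) by (simp add: den_def)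
    ultimately have "Y t - poly b (u + t) = - c * t ^ order u E * poly Q (u + t) / (Y t + poly b (u + t))"
      by (simp add: field_simps)
    then have "g t = num t / den t * (t ^ order u E / t ^ order u A)"
      using gY[of t] R(2)[of t] t(1,2) by (simp add: num_def den_def mult_ac)
    also have "t ^ order u E / t ^ order u A = t powi (int (order u E) - int (order u A))"
      using t(2) by (simp add: power_int_diff)
    finally show "g t = num t / den t * t powi (int (order u E) - int (order u A))" .
  qed
qed

lemma branch_local_y_factor:
  fixes p :: "complex poly"
  assumes p: "rsquarefree p" "poly p u = 0" and e: "e > 0" and hY: "Y holomorphic_on ball 0 e"
    and Ysq: "\<And>t. t \<in> ball 0 e \<Longrightarrow> (Y t)^2 = poly p (u + t^2)"
  obtains W where "W holomorphic_on ball 0 e" "W 0 \<noteq> 0" "\<And>t. Y t = t * W t"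
proof -
  obtain q where q: "p = [:-u,1:] * q" "poly q u \<noteq> 0" using rsquarefree_root_factor[OF p] .
  have Y0: "Y 0 = 0" using Ysq[of 0] e p(2) by simp
  define W where "W = (\<lambda>z. if z = 0 then deriv Y 0 else (Y z - Y 0) / (z - 0))"
  have hW: "W holomorphic_on ball 0 e" unfolding W_def by (rule pole_lemma[OF hY]) (use e in auto)
  have YW: "Y t = t * W t" for t using Y0 by (cases "t = 0") (auto simp: W_def)
  have "W 0 ^ 2 = poly q (u + 0^2)"
  proof -
    have "isCont W 0"
      using holomorphic_on_imp_continuous_on[OF hW] continuous_on_eq_continuous_at[of "ball 0 e" W] e
      by simp
    then have lim_W: "((\<lambda>t. W t ^ 2) \<longlongrightarrow> W 0 ^ 2) (at 0)"
      by (intro tendsto_intros) (simp add: isCont_def)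
    have Wsq: "W t ^ 2 = poly q (u + t^2)" if "t \<in> ball 0 e" "t \<noteq> 0" for t
    proof -
      have "t^2 * W t ^ 2 = t^2 * poly q (u + t^2)"
        using Ysq[OF that(1)] by (simp add: YW q(1) power_mult_distrib algebra_simps)
      then show ?thesis using that(2) by simp
    qed
    have "eventually (\<lambda>t. poly q (u + t^2) = W t ^ 2) (at 0)"
      unfolding eventually_at using e Wsq by (intro exI[of _ e]) (auto simp: dist_commute)
    moreover have "isCont (\<lambda>t. poly q (u + t^2)) 0" by (intro continuous_intros)
    ultimately have "((\<lambda>t. W t ^ 2) \<longlongrightarrow> poly q (u + 0^2)) (at 0)"
      by (simp add: isCont_def tendsto_cong)
    with lim_W show ?thesis by (rule LIM_unique)
  qed
  with q(2) have "W 0 \<noteq> 0" by auto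
  with hW YW show thesis using that by blast
qed


lemma ff_ord_cantor_fun_branch_pole:
  fixes p b A :: "complex poly"
  assumes p: "rsquarefree p" "poly p u = 0" and bu: "poly b u \<noteq> 0" and A: "A \<noteq> 0"
  shows "ff_ord p (cantor_fun b A) (Fin u 0) = - 2 * int (order u A)"
proof (rule ff_ord_eqI)
  show "\<exists>g. local_expr p (Fin u 0) (cantor_fun b A) g" by (rule local_expr_exists_branch[OF p])
next
  fix g assume "local_expr p (Fin u 0) (cantor_fun b A) g"
  then obtain e Y where e: "e > 0" and hY: "Y holomorphic_on ball 0 e"
    and Ysq: "\<And>t. t \<in> ball 0 e \<Longrightarrow> (Y t)^2 = poly p (u + t^2)"
    and gY: "\<And>t. t \<in> ball 0 e - {0} \<Longrightarrow> g t = (Y t - poly b (u + t^2)) / poly A (u + t^2)"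
    unfolding local_expr_def by (auto simp: ff_eval_cantor_fun)
  obtain R where R: "poly R u \<noteq> 0" "\<And>t. poly A (u + t) = t ^ order u A * poly R (u + t)"
    using poly_shift_order[OF A] by blast
  have "Y 0 = 0" using Ysq[of 0] e p(2) by simp
  have "zorder g 0 = - int (2 * order u A)"
  proof (rule zorder_eq_if_quotient[OF e, of "\<lambda>t. Y t - poly b (u + t^2)" "\<lambda>t. poly R (u + t^2)"])
    show "(\<lambda>t. Y t - poly b (u + t^2)) holomorphic_on ball 0 e" by (intro holomorphic_intros hY)
    show "(\<lambda>t. poly R (u + t^2)) holomorphic_on ball 0 e" by (intro holomorphic_intros)
  next
    fix t :: complex assume t: "t \<in> ball 0 e" "t \<noteq> 0"
    have "g t = (Y t - poly b (u + t^2)) / poly R (u + t^2) * inverse (t ^ (2 * order u A))"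
      using gY[of t] R(2)[of "t^2"] t by (simp add: power_mult field_simps)
    then show "g t = (Y t - poly b (u + t^2)) / poly R (u + t^2) * t powi (- int (2 * order u A))"
      by (simp only: power_int_minus power_int_of_nat)
  qed (use bu \<open>Y 0 = 0\<close> R(1) in auto)
  then show "zorder g 0 = - 2 * int (order u A)" by simp
qed

lemma ff_ord_cantor_fun_branch_zero:
  fixes p b A :: "complex poly"
  assumes p: "rsquarefree p" "poly p u = 0" and bu: "poly b u = 0" and A: "A \<noteq> 0"
  shows "ff_ord p (cantor_fun b A) (Fin u 0) = 1 - 2 * int (order u A)"
proof (rule ff_ord_eqI)
  show "\<exists>g. local_expr p (Fin u 0) (cantor_fun b A) g" by (rule local_expr_exists_branch[OF p])
next
  fix g assume "local_expr p (Fin u 0) (cantor_fun b A) g"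
  then obtain e Y where e: "e > 0" and hY: "Y holomorphic_on ball 0 e"
    and Ysq: "\<And>t. t \<in> ball 0 e \<Longrightarrow> (Y t)^2 = poly p (u + t^2)"
    and gY: "\<And>t. t \<in> ball 0 e - {0} \<Longrightarrow> g t = (Y t - poly b (u + t^2)) / poly A (u + t^2)"
    unfolding local_expr_def by (auto simp: ff_eval_cantor_fun)
  obtain W where W: "W holomorphic_on ball 0 e" "W 0 \<noteq> 0" "\<And>t. Y t = t * W t"
    using branch_local_y_factor[OF p e hY Ysq] by blast
  obtain R where R: "poly R u \<noteq> 0" "\<And>t. poly A (u + t) = t ^ order u A * poly R (u + t)"
    using poly_shift_order[OF A] by blast
  obtain c where c: "b = [:-u,1:] * c" using bu by (metis dvdE poly_eq_0_iff_dvd)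
  have "zorder g 0 = 1 - int (2 * order u A)"
  proof (rule zorder_eq_if_quotient[OF e, of "\<lambda>t. W t - t * poly c (u + t^2)" "\<lambda>t. poly R (u + t^2)"])
    show "(\<lambda>t. W t - t * poly c (u + t^2)) holomorphic_on ball 0 e" by (intro holomorphic_intros W(1))
    show "(\<lambda>t. poly R (u + t^2)) holomorphic_on ball 0 e" by (intro holomorphic_intros)
  next
    fix t :: complex assume t: "t \<in> ball 0 e" "t \<noteq> 0"
    have "g t = (W t - t * poly c (u + t^2)) / poly R (u + t^2) * (t / t ^ (2 * order u A))"
      using gY[of t] R(2)[of "t^2"] t by (simp add: W(3) c power2_eq_square power_mult field_simps)
    also have "t / t ^ (2 * order u A) = t powi (1 - int (2 * order u A))"
      using t(2) power_int_diff[of t 1 "int (2 * order u A)"]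
      by (simp only: power_int_of_nat power_int_1_right) simp
    finally show "g t = (W t - t * poly c (u + t^2)) / poly R (u + t^2) * t powi (1 - int (2 * order u A))" .
  qed (use W(2) R(1) in auto)
  then show "zorder g 0 = 1 - 2 * int (order u A)" by simp
qed

lemma order_square_minus_at_simple_root:
  fixes p b :: "complex poly"
  assumes "rsquarefree p" "poly p u = 0" "poly b u = 0"
  shows "order u (b^2 - p) = 1"
proof -
  have "poly (pderiv p) u \<noteq> 0" using assms(1,2) by (auto simp: rsquarefree_roots)
  then have "poly (pderiv (b^2 - p)) u \<noteq> 0" using assms(3) by (simp add: pderiv_diff pderiv_power)
  then have "b^2 - p \<noteq> 0" "order u (pderiv (b^2 - p)) = 0" by (auto simp: order_0I)
  moreover have "poly (b^2 - p) u = 0" using assms(2,3) by simp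
  ultimately show ?thesis using order_pderiv[of "b^2 - p" u] by simp
qed

lemma ff_ord_cantor_fun_Fin:
  fixes p b A B :: "complex poly"
  assumes p: "rsquarefree p" and on: "v^2 = poly p u"
    and AB: "A \<noteq> 0" "B \<noteq> 0" and c: "c \<noteq> 0" and H: "b^2 - p = smult c (B * A)"
  shows "ff_ord p (cantor_fun b A) (Fin u v)
           = of_bool (v = poly b u) * int (order u B) - of_bool (v = - poly b u) * int (order u A)"
proof -
  have on_A: "poly b u ^ 2 = poly p u" if "poly A u = 0"
  proof -
    have "poly (b^2 - p) u = poly (smult c (B * A)) u" using H by simp
    then show ?thesis using that by simp
  qed
  have ord_BA: "order u (B * A) = order u B + order u A" using AB by (simp add: order_mult)
  show ?thesis
  proof (cases "v = 0")
    case False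
    consider "v = poly b u" | "v = - poly b u" | "v \<noteq> poly b u" "v \<noteq> - poly b u" by blast
    then show ?thesis
    proof cases
      case 1
      with False have "v \<noteq> - poly b u" by auto
      with 1 show ?thesis
        using ff_ord_cantor_fun_nonbranch_zero[OF False on 1 AB(1) _ c H] AB ord_BA by simp
    next
      case 2
      with False have "v \<noteq> poly b u" by auto
      with 2 show ?thesis using ff_ord_cantor_fun_nonbranch_pole[OF False on _ AB(1)] by simp
    next
      case 3
      then have "poly A u \<noteq> 0" using on on_A power2_eq_iff[of v "poly b u"] by auto
      then show ?thesis using 3 ff_ord_cantor_fun_nonbranch_pole[OF False on 3(1) AB(1)] by (simp add: order_0I)
    qed
  next
    case True
    then have pu: "poly p u = 0" using on by simp
    show ?thesis
    proof (cases "poly b u = 0")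
      case True
      have "order u (B * A) = 1"
        using order_square_minus_at_simple_root[OF p pu True] H c by (simp add: order_smult)
      then show ?thesis using True \<open>v = 0\<close> ff_ord_cantor_fun_branch_zero[OF p pu True AB(1)] ord_BA by simp
    next
      case False
      then have "poly A u \<noteq> 0" using pu on_A by auto
      then show ?thesis
        using False \<open>v = 0\<close> ff_ord_cantor_fun_branch_pole[OF p pu False AB(1)] by (simp add: order_0I)
    qed
  qed
qed

lemma order_linear_factor: "order u [:-x, 1:] = of_bool (u = x)" for u x :: "'a::idom"
  using order_power_n_n[of x 1] by (auto intro: order_0I)

lemma ff_div_cantor_fun_Fin:
  fixes p b :: "complex poly"
  assumes p: "rsquarefree p" and b0: "b0 \<noteq> 0"
    and H: "b^2 - p = smult (b0^2) ([:-x1,1:] * [:-x2,1:] * ([:-x3,1:] * [:-x4,1:]) * ([:-x5,1:] * [:-x6,1:]))"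
  shows "ff_div p (cantor_fun b ([:-x5,1:] * [:-x6,1:])) (Fin u v)
           = two_pt_div (Fin x1 (poly b x1)) (Fin x2 (poly b x2)) (Fin u v)
             + two_pt_div (Fin x3 (poly b x3)) (Fin x4 (poly b x4)) (Fin u v)
             - two_pt_div (Fin x5 (- poly b x5)) (Fin x6 (- poly b x6)) (Fin u v)"
proof -
  define B where "B = [:-x1,1:] * [:-x2,1:] * ([:-x3,1:] * [:-x4,1:])"
  define A where "A = [:-x5,1:] * [:-x6,1:]"
  have AB: "A \<noteq> 0" "B \<noteq> 0" by (simp_all add: A_def B_def)
  have H': "b^2 - p = smult (b0^2) (B * A)" using H by (simp add: A_def B_def)
  show ?thesis
  proof (cases "v^2 = poly p u")
    case True
    have pt_div_on: "pt_div (Fin x (poly b x)) (Fin u v) = of_bool (v = poly b u) * of_bool (u = x)"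
      and pt_div_opp: "pt_div (Fin x (- poly b x)) (Fin u v) = of_bool (v = - poly b u) * of_bool (u = x)"
      for x by (auto simp: pt_div_def)
    have ord: "int (order u B) = of_bool (u = x1) + of_bool (u = x2) + of_bool (u = x3) + of_bool (u = x4)"
      "int (order u A) = of_bool (u = x5) + of_bool (u = x6)" unfolding A_def B_def
      by (simp_all only: order_mult mult_eq_0_iff pCons_eq_0_iff one_neq_zero simp_thms order_linear_factor)
        simp_all
    have "ff_div p (cantor_fun b A) (Fin u v)
        = of_bool (v = poly b u) * int (order u B) - of_bool (v = - poly b u) * int (order u A)"
      using ff_ord_cantor_fun_Fin[OF p True AB _ H'] b0 True by (simp add: ff_div_def on_curve_def)
    then show ?thesis
      unfolding A_def[symmetric] two_pt_div_def pt_div_on pt_div_opp ord by (simp add: pt_div_def algebra_simps)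
  next
    case False
    have "poly b x ^ 2 = poly p x" if "x \<in> {x1, x2, x3, x4, x5, x6}" for x
    proof -
      have "poly B x * poly A x = 0" unfolding A_def B_def poly_mult using that by auto
      then have "poly (b^2 - p) x = 0" unfolding H' by simp
      then show ?thesis by simp
    qed
    then have "pt_div (Fin x (poly b x)) (Fin u v) = 0" "pt_div (Fin x (- poly b x)) (Fin u v) = 0"
      if "x \<in> {x1, x2, x3, x4, x5, x6}" for x
      using that False by (auto simp: pt_div_def)
    moreover have "pt_div Inf (Fin u v) = 0" by (simp add: pt_div_def)
    ultimately show ?thesis using False by (simp add: two_pt_div_def ff_div_def on_curve_def)
  qed
qed

lemma lin_equiv_cantor_fun:
  fixes p b :: "complex poly"
  assumes p: "p = [:a5, a4, a3, a2, a1, a0:]" "a0 \<noteq> 0" "rsquarefree p"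
    and b: "b = [:b3, b2, b1, b0:]" "b0 \<noteq> 0"
    and H: "b^2 - p = smult (b0^2) ([:-x1,1:] * [:-x2,1:] * ([:-x3,1:] * [:-x4,1:]) * ([:-x5,1:] * [:-x6,1:]))"
  shows "lin_equiv p
           (\<lambda>R. two_pt_div (Fin x1 (poly b x1)) (Fin x2 (poly b x2)) R
              + two_pt_div (Fin x3 (poly b x3)) (Fin x4 (poly b x4)) R)
           (two_pt_div (Fin x5 (- poly b x5)) (Fin x6 (- poly b x6)))"
  unfolding lin_equiv_def
proof (intro exI conjI allI)
  show "ff_valid (cantor_fun b ([:-x5,1:] * [:-x6,1:]))" by (simp add: ff_valid_cantor_fun)
  fix R
  show "two_pt_div (Fin x1 (poly b x1)) (Fin x2 (poly b x2)) R + two_pt_div (Fin x3 (poly b x3)) (Fin x4 (poly b x4)) R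
      - two_pt_div (Fin x5 (- poly b x5)) (Fin x6 (- poly b x6)) R
      = ff_div p (cantor_fun b ([:-x5,1:] * [:-x6,1:])) R"
  proof (cases R)
    case Inf
    have "[:-x5,1:] * [:-x6,1:] = [:x5 * x6, - x5 - x6, 1:]" by simp
    with ff_ord_cantor_fun_Inf[OF p(1,2) b] show ?thesis
      by (simp add: Inf ff_div_def on_curve_def two_pt_div_def pt_div_def)
  next
    case (Fin u v)
    show ?thesis unfolding Fin by (simp only: ff_div_cantor_fun_Fin[OF p(3) b(2) H])
  qed
qed

lemma quadratic_poly_eq_roots:
  fixes \<alpha> \<beta> r s :: complex
  assumes "\<forall>x. x^2 + \<alpha> * x + \<beta> = (x - r) * (x - s)"
  shows "[:\<beta>, \<alpha>, 1:] = [:-r, 1:] * [:-s, 1:]"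
  by (rule poly_eq_poly_eq_iff[THEN iffD1]) (use assms in \<open>auto simp: algebra_simps power2_eq_square\<close>)

lemma cubic_mod_quadratic:
  fixes x \<alpha> \<beta> b0 b1 b2 b3 :: "'a::comm_ring_1"
  assumes "poly [:\<beta>, \<alpha>, 1:] x = 0"
  shows "poly [:b3, b2, b1, b0:] x = (b0 * (\<alpha>^2 - \<beta>) - b1 * \<alpha> + b2) * x + (b0 * (\<alpha> * \<beta>) - b1 * \<beta> + b3)"
proof -
  have "poly [:b3, b2, b1, b0:] x = (b0 * x + b1 - b0 * \<alpha>) * poly [:\<beta>, \<alpha>, 1:] x
      + (b0 * (\<alpha>^2 - \<beta>) - b1 * \<alpha> + b2) * x + (b0 * (\<alpha> * \<beta>) - b1 * \<beta> + b3)"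
    by (simp add: algebra_simps power2_eq_square)
  with assms show ?thesis by simp
qed

lemma mumford_cubic_reduces:
  fixes \<alpha>1 \<beta>1 \<gamma>1 \<delta>1 \<alpha>2 \<beta>2 \<gamma>2 \<delta>2 :: complex
  defines "N \<equiv> (\<beta>1 - \<beta>2)^2 + (\<alpha>1 - \<alpha>2) * (\<alpha>1 * \<beta>2 - \<alpha>2 * \<beta>1)"
  defines "b0 \<equiv> ((\<beta>2 - \<beta>1) * (\<gamma>1 - \<gamma>2) + (\<alpha>1 - \<alpha>2) * (\<delta>1 - \<delta>2)) / N"
  defines "b1 \<equiv> ((\<alpha>2 * \<beta>2 - \<alpha>1 * \<beta>1) * (\<gamma>1 - \<gamma>2)
                 + (\<alpha>1^2 - \<alpha>2^2 - \<beta>1 + \<beta>2) * (\<delta>1 - \<delta>2)) / N"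
  defines "b2 \<equiv> (\<alpha>2^2 * \<beta>1 * \<gamma>1 + \<alpha>1^2 * \<beta>2 * \<gamma>2 - \<alpha>1 * \<alpha>2 * (\<beta>1 * \<gamma>1 + \<beta>2 * \<gamma>2)
                 + (\<beta>1 - \<beta>2) * (\<beta>1 * \<gamma>2 - \<beta>2 * \<gamma>1)
                 + (\<alpha>1 * \<alpha>2 * (\<alpha>1 - \<alpha>2) + (\<alpha>1 * \<beta>2 - \<alpha>2 * \<beta>1)) * (\<delta>1 - \<delta>2)) / N"
  defines "b3 \<equiv> ((\<alpha>2 - \<alpha>1) * \<beta>1 * \<beta>2 * (\<gamma>1 - \<gamma>2) + \<alpha>1^2 * \<beta>2 * \<delta>1 + \<alpha>2^2 * \<beta>1 * \<delta>2
                 - \<alpha>1 * \<alpha>2 * (\<beta>2 * \<delta>1 + \<beta>1 * \<delta>2)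
                 + (\<beta>1 - \<beta>2) * (\<beta>1 * \<delta>2 - \<beta>2 * \<delta>1)) / N"
  assumes "N \<noteq> 0"
  shows "poly [:\<beta>1, \<alpha>1, 1:] x = 0 \<Longrightarrow> poly [:b3, b2, b1, b0:] x = \<gamma>1 * x + \<delta>1"
    and "poly [:\<beta>2, \<alpha>2, 1:] x = 0 \<Longrightarrow> poly [:b3, b2, b1, b0:] x = \<gamma>2 * x + \<delta>2"
proof -
  have div_N: "n0 / N * X - n1 / N * Y + n2 / N = g" if "n0 * X - n1 * Y + n2 = g * N" for n0 n1 n2 X Y g
  proof -
    have "n0 / N * X - n1 / N * Y + n2 / N = (n0 * X - n1 * Y + n2) / N"
      using assms(6) by (simp add: field_simps)
    with that assms(6) show ?thesis by simp
  qed
  have \<gamma>: "b0 * (\<alpha>1^2 - \<beta>1) - b1 * \<alpha>1 + b2 = \<gamma>1" "b0 * (\<alpha>2^2 - \<beta>2) - b1 * \<alpha>2 + b2 = \<gamma>2"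
    unfolding b0_def b1_def b2_def by (rule div_N, simp add: N_def algebra_simps power2_eq_square)+
  have \<delta>: "b0 * (\<alpha>1 * \<beta>1) - b1 * \<beta>1 + b3 = \<delta>1" "b0 * (\<alpha>2 * \<beta>2) - b1 * \<beta>2 + b3 = \<delta>2"
    unfolding b0_def b1_def b3_def by (rule div_N, simp add: N_def algebra_simps power2_eq_square)+
  show "poly [:\<beta>1, \<alpha>1, 1:] x = 0 \<Longrightarrow> poly [:b3, b2, b1, b0:] x = \<gamma>1 * x + \<delta>1"
    using cubic_mod_quadratic[of \<beta>1 \<alpha>1 x b3 b2 b1 b0] unfolding \<gamma>(1) \<delta>(1) .
  show "poly [:\<beta>2, \<alpha>2, 1:] x = 0 \<Longrightarrow> poly [:b3, b2, b1, b0:] x = \<gamma>2 * x + \<delta>2"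
    using cubic_mod_quadratic[of \<beta>2 \<alpha>2 x b3 b2 b1 b0] unfolding \<gamma>(2) \<delta>(2) .
qed

lemma poly_eq_0_if_nonzero_roots:
  fixes Z :: "'a::idom poly"
  assumes "coeff Z 0 = 0" "degree Z \<le> card S" "0 \<notin> S" "\<forall>x\<in>S. poly Z x = 0"
  shows "Z = 0"
proof -
  obtain Q where Z: "Z = pCons 0 Q" using assms(1) by (cases Z) auto
  have "Q = 0"
  proof (rule ccontr)
    assume "Q \<noteq> 0"
    then have "degree Q < card S" using assms(2) by (simp add: Z)
    moreover have "poly Q x = poly 0 x" if "x \<in> S" for x
      using assms(3,4) that by (auto simp: Z)
    ultimately have "Q = 0" by (intro poly_eqI_degree[of S]) auto
    with \<open>Q \<noteq> 0\<close> show False ..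
  qed
  then show ?thesis by (simp add: Z)
qed

lemma square_minus_quintic_factors:
  fixes b p :: "complex poly"
  assumes b: "b = [:b3, b2, b1, b0:]" and p: "p = [:a5, a4, a3, a2, a1, a0:]"
    and \<alpha>3: "\<alpha>3 = - \<alpha>1 - \<alpha>2 - (a0 - 2 * b0 * b1) / b0^2"
    and \<beta>3: "\<beta>3 = (b3^2 - a5) / (b0^2 * \<beta>1 * \<beta>2)"
    and nz: "b0 \<noteq> 0" "\<beta>1 \<noteq> 0" "\<beta>2 \<noteq> 0"
    and A1: "[:\<beta>1, \<alpha>1, 1:] = [:-x1, 1:] * [:-x2, 1:]" and A2: "[:\<beta>2, \<alpha>2, 1:] = [:-x3, 1:] * [:-x4, 1:]"
    and S: "distinct [x1, x2, x3, x4]" and on: "\<forall>x\<in>{x1, x2, x3, x4}. poly b x ^ 2 = poly p x"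
  shows "b^2 - p = smult (b0^2) ([:\<beta>1, \<alpha>1, 1:] * [:\<beta>2, \<alpha>2, 1:] * [:\<beta>3, \<alpha>3, 1:])"
proof -
  define Z where "Z = b^2 - p - smult (b0^2) ([:\<beta>1, \<alpha>1, 1:] * [:\<beta>2, \<alpha>2, 1:] * [:\<beta>3, \<alpha>3, 1:])"
  have "b0^2 * (\<alpha>1 + \<alpha>2 + \<alpha>3) = 2 * b0 * b1 - a0"
    unfolding \<alpha>3 using nz by (simp add: field_simps power2_eq_square)
  then have "coeff Z 5 = 0" "coeff Z 6 = 0" unfolding Z_def b p
    by (simp_all add: power2_eq_square algebra_simps numeral_eq_Suc)
  have "b0^2 * (\<beta>1 * \<beta>2 * \<beta>3) = b3^2 - a5" unfolding \<beta>3 using nz by (simp add: field_simps)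
  then have "coeff Z 0 = 0" unfolding Z_def b p by (simp add: power2_eq_square algebra_simps)
  moreover have "degree Z \<le> card {x1, x2, x3, x4}"
  proof (intro degree_le allI impI)
    fix i :: nat assume "card {x1, x2, x3, x4} < i"
    then consider "i = 5" | "i = 6" | "6 < i" using S by force
    then show "coeff Z i = 0"
    proof cases
      case 3
      have "degree Z \<le> 6" unfolding Z_def b p by (simp add: power2_eq_square algebra_simps)
      with 3 show ?thesis by (simp add: coeff_eq_0)
    qed (use \<open>coeff Z 5 = 0\<close> \<open>coeff Z 6 = 0\<close> in auto)
  qed
  moreover have "0 \<notin> {x1, x2, x3, x4}"
    using nz arg_cong[OF A1, of "\<lambda>q. coeff q 0"] arg_cong[OF A2, of "\<lambda>q. coeff q 0"] by auto
  moreover have "\<forall>x\<in>{x1, x2, x3, x4}. poly Z x = 0"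
  proof
    fix x assume "x \<in> {x1, x2, x3, x4}"
    with on have "poly b x ^ 2 = poly p x" "poly ([:\<beta>1, \<alpha>1, 1:] * [:\<beta>2, \<alpha>2, 1:]) x = 0"
      unfolding A1 A2 poly_mult by auto
    then show "poly Z x = 0"
      unfolding Z_def poly_diff poly_power poly_smult poly_mult[of "[:\<beta>1, \<alpha>1, 1:] * [:\<beta>2, \<alpha>2, 1:]"] by simp
  qed
  ultimately have "Z = 0" by (intro poly_eq_0_if_nonzero_roots)
  then show ?thesis by (simp add: Z_def)
qed

theorem mainTheorem4:
  fixes a0 a1 a2 a3 a4 a5 :: complex
    and x1 y1 x2 y2 x3 y3 x4 y4 :: complex
    and \<alpha>1 \<beta>1 \<gamma>1 \<delta>1 \<alpha>2 \<beta>2 \<gamma>2 \<delta>2 :: complex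
    and x5 x6 :: complex
  defines "p \<equiv> [:a5, a4, a3, a2, a1, a0:]"
  defines "N \<equiv> (\<beta>1 - \<beta>2)^2 + (\<alpha>1 - \<alpha>2) * (\<alpha>1 * \<beta>2 - \<alpha>2 * \<beta>1)"
  defines "b0 \<equiv> ((\<beta>2 - \<beta>1) * (\<gamma>1 - \<gamma>2) + (\<alpha>1 - \<alpha>2) * (\<delta>1 - \<delta>2)) / N"
  defines "b1 \<equiv> ((\<alpha>2 * \<beta>2 - \<alpha>1 * \<beta>1) * (\<gamma>1 - \<gamma>2)
                 + (\<alpha>1^2 - \<alpha>2^2 - \<beta>1 + \<beta>2) * (\<delta>1 - \<delta>2)) / N"
  defines "b2 \<equiv> (\<alpha>2^2 * \<beta>1 * \<gamma>1 + \<alpha>1^2 * \<beta>2 * \<gamma>2 - \<alpha>1 * \<alpha>2 * (\<beta>1 * \<gamma>1 + \<beta>2 * \<gamma>2)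
                 + (\<beta>1 - \<beta>2) * (\<beta>1 * \<gamma>2 - \<beta>2 * \<gamma>1)
                 + (\<alpha>1 * \<alpha>2 * (\<alpha>1 - \<alpha>2) + (\<alpha>1 * \<beta>2 - \<alpha>2 * \<beta>1)) * (\<delta>1 - \<delta>2)) / N"
  defines "b3 \<equiv> ((\<alpha>2 - \<alpha>1) * \<beta>1 * \<beta>2 * (\<gamma>1 - \<gamma>2) + \<alpha>1^2 * \<beta>2 * \<delta>1 + \<alpha>2^2 * \<beta>1 * \<delta>2
                 - \<alpha>1 * \<alpha>2 * (\<beta>2 * \<delta>1 + \<beta>1 * \<delta>2)
                 + (\<beta>1 - \<beta>2) * (\<beta>1 * \<delta>2 - \<beta>2 * \<delta>1)) / N"
  defines "\<alpha>3 \<equiv> - \<alpha>1 - \<alpha>2 - (a0 - 2 * b0 * b1) / b0^2"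
  defines "\<beta>3 \<equiv> (b3^2 - a5) / (b0^2 * \<beta>1 * \<beta>2)"
  defines "\<gamma>3 \<equiv> - b2 + b1 * \<alpha>3 - b0 * \<alpha>3^2 + b0 * \<beta>3"
  defines "\<delta>3 \<equiv> - b0 * \<alpha>3 * \<beta>3 + b1 * \<beta>3 - b3"
  assumes a0_nz: "a0 \<noteq> 0"
    and sqfree: "rsquarefree p"
    and P1: "y1^2 = poly p x1" and P2: "y2^2 = poly p x2"
    and Q1: "y3^2 = poly p x3" and Q2: "y4^2 = poly p x4"
    and distinct: "distinct [x1, x2, x3, x4]"
    and A1: "\<forall>x. x^2 + \<alpha>1 * x + \<beta>1 = (x - x1) * (x - x2)"
    and B1: "\<gamma>1 * x1 + \<delta>1 = y1" "\<gamma>1 * x2 + \<delta>1 = y2"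
    and A2: "\<forall>x. x^2 + \<alpha>2 * x + \<beta>2 = (x - x3) * (x - x4)"
    and B2: "\<gamma>2 * x3 + \<delta>2 = y3" "\<gamma>2 * x4 + \<delta>2 = y4"
    and nz: "N * b0 * \<beta>1 * \<beta>2 \<noteq> 0"
    and A3: "\<forall>x. x^2 + \<alpha>3 * x + \<beta>3 = (x - x5) * (x - x6)"
  shows "on_curve p (Fin x5 (\<gamma>3 * x5 + \<delta>3))
       \<and> on_curve p (Fin x6 (\<gamma>3 * x6 + \<delta>3))
       \<and> lin_equiv p
           (\<lambda>R. two_pt_div (Fin x1 y1) (Fin x2 y2) R + two_pt_div (Fin x3 y3) (Fin x4 y4) R)
           (two_pt_div (Fin x5 (\<gamma>3 * x5 + \<delta>3)) (Fin x6 (\<gamma>3 * x6 + \<delta>3)))"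
proof -
  have N0: "N \<noteq> 0" and b0_nz: "b0 \<noteq> 0" and \<beta>_nz: "\<beta>1 \<noteq> 0" "\<beta>2 \<noteq> 0" using nz by auto
  have A1': "[:\<beta>1, \<alpha>1, 1:] = [:-x1, 1:] * [:-x2, 1:]" using A1 by (rule quadratic_poly_eq_roots)
  have A2': "[:\<beta>2, \<alpha>2, 1:] = [:-x3, 1:] * [:-x4, 1:]" using A2 by (rule quadratic_poly_eq_roots)
  have A3': "[:\<beta>3, \<alpha>3, 1:] = [:-x5, 1:] * [:-x6, 1:]" using A3 by (rule quadratic_poly_eq_roots)
  have p_eq: "p = [:a5, a4, a3, a2, a1, a0:]" by (simp add: p_def)
  define b where "b = [:b3, b2, b1, b0:]"
  have interpolates: "poly b x1 = y1" "poly b x2 = y2" "poly b x3 = y3" "poly b x4 = y4"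
    unfolding b_def b0_def b1_def b2_def b3_def N_def B1(1,2)[symmetric] B2(1,2)[symmetric]
    by (rule mumford_cubic_reduces[OF N0[unfolded N_def]]; simp add: A1' A2')+
  have "b^2 - p = smult (b0^2) ([:\<beta>1, \<alpha>1, 1:] * [:\<beta>2, \<alpha>2, 1:] * [:\<beta>3, \<alpha>3, 1:])"
    by (rule square_minus_quintic_factors[OF b_def p_eq \<alpha>3_def[THEN meta_eq_to_obj_eq]
          \<beta>3_def[THEN meta_eq_to_obj_eq] b0_nz \<beta>_nz A1' A2' distinct])
      (use P1 P2 Q1 Q2 interpolates in auto)
  then have sextic: "b^2 - p = smult (b0^2) ([:-x1,1:] * [:-x2,1:] * ([:-x3,1:] * [:-x4,1:]) * ([:-x5,1:] * [:-x6,1:]))"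
    unfolding A1' A2' A3' .
  have reduced: "\<gamma>3 * x + \<delta>3 = - poly b x" and on: "poly b x ^ 2 = poly p x" if "x = x5 \<or> x = x6" for x
  proof -
    have "poly [:\<beta>3, \<alpha>3, 1:] x = 0" using that by (auto simp: A3')
    from cubic_mod_quadratic[OF this, of b3 b2 b1 b0] show "\<gamma>3 * x + \<delta>3 = - poly b x"
      unfolding b_def \<gamma>3_def \<delta>3_def by (simp add: algebra_simps)
    have "poly (b^2 - p) x = 0" unfolding sextic using that by (auto simp del: mult_pCons_left mult_pCons_right)
    then show "poly b x ^ 2 = poly p x" by simp
  qed
  have "lin_equiv p
           (\<lambda>R. two_pt_div (Fin x1 (poly b x1)) (Fin x2 (poly b x2)) R
              + two_pt_div (Fin x3 (poly b x3)) (Fin x4 (poly b x4)) R)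
           (two_pt_div (Fin x5 (- poly b x5)) (Fin x6 (- poly b x6)))"
    by (rule lin_equiv_cantor_fun[OF p_eq a0_nz sqfree b_def b0_nz sextic])
  then show ?thesis using on reduced unfolding interpolates by (simp add: on_curve_def)
qed

end
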